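(* Consider the multi-sender unicast index-coding instance with $N=5$ messages, $K=4$ senders with $\mathcal S_1=\{1,2,3\}$, $\mathcal S_2=\{2,3,4\}$, $\mathcal S_3=\{1,2\}$, $\mathcal S_4=\{2,4,5\}$, each with link capacity $C_k=1$, and receiver side information $\mathcal A_1=\{4,5\}$, $\mathcal A_2=\{1,3,5\}$, $\mathcal A_3=\{1,2\}$, $\mathcal A_4=\{2,3,5\}$, $\mathcal A_5=\{3\}$. Its capacity region is $$\mathcal C=\left\{(R_1,\dots,R_5)\in\mathbb R_+^5:\begin{array}{l}R_1\le2,\ R_3\le2,\ R_5\le1,\ R_1+R_3\le3,\ R_4+R_5\le2,\\ R_1+R_2+R_5\le4,\ R_2+R_4+R_5\le4,\ R_3+R_4+R_5\le3\end{array}\right\}.$$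
   Context: Model. $N$ independent messages $M_1,\dots,M_N$, $M_j$ uniform on $[1:2^{nR_j}]$ ($n$ the block length). Sender $k$ knows the messages $M_i$, $i\in\mathcal S_k$, and sends an index $L_k=f_k((M_i)_{i\in\mathcal S_k})\in[1:2^{nC_k})=\{1,\dots,2^{\lfloor nC_k\rfloor}\}$ over a noiseless broadcast link reaching all receivers. Receiver $j$ knows $M_i$, $i\in\mathcal A_j$, and must output an estimate $\hat M_j=g_j(L_1,\dots,L_K,(M_i)_{i\in\mathcal A_j})$ of $M_j$. A rate tuple is achievable if there exist such codes with $\Pr[(\hat M_1,\dots,\hat M_N)\ne(M_1,\dots,M_N)]\to0$ as $n\to\infty$; the capacity region $\mathcal C$ is the closure of the set of achievable rate tuples. *)

theory Defs
  imports "HOL-Analysis.Analysis"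
begin

text \<open>Messages are indexed by 1..N, senders by 1..K.
  A rate tuple is a function R :: nat => real, supported on 1..N.\<close>

definition msg_set :: "nat \<Rightarrow> nat \<Rightarrow> (nat \<Rightarrow> real) \<Rightarrow> (nat \<Rightarrow> nat) set" where
  "msg_set N n R = {m. (\<forall>j\<in>{1..N}. m j < 2 ^ nat \<lfloor>real n * R j\<rfloor>) \<and> (\<forall>j. j \<notin> {1..N} \<longrightarrow> m j = 0)}"

text \<open>f k : encoder of sender k (depends only on messages in S k);
  g j : decoder of receiver j, applied to the broadcast indices (L_1..L_K) and the message tuple,
  depending only on L_1..L_K and on the messages in A j.\<close>
definition valid_code ::
  "nat \<Rightarrow> nat \<Rightarrow> (nat \<Rightarrow> nat set) \<Rightarrow> (nat \<Rightarrow> real) \<Rightarrow> (nat \<Rightarrow> nat set) \<Rightarrow> nat \<Rightarrow> (nat \<Rightarrow> real)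
   \<Rightarrow> (nat \<Rightarrow> (nat \<Rightarrow> nat) \<Rightarrow> nat) \<Rightarrow> (nat \<Rightarrow> (nat \<Rightarrow> nat) \<Rightarrow> (nat \<Rightarrow> nat) \<Rightarrow> nat) \<Rightarrow> bool" where
  "valid_code N K S C A n R f g \<longleftrightarrow>
     (\<forall>k\<in>{1..K}. \<forall>m m'. (\<forall>i\<in>S k. m i = m' i) \<longrightarrow> f k m = f k m') \<and>
     (\<forall>k\<in>{1..K}. \<forall>m\<in>msg_set N n R. f k m < 2 ^ nat \<lfloor>real n * C k\<rfloor>) \<and>
     (\<forall>j\<in>{1..N}. \<forall>l l' m m'. (\<forall>k\<in>{1..K}. l k = l' k) \<and> (\<forall>i\<in>A j. m i = m' i)
          \<longrightarrow> g j l m = g j l' m')"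

text \<open>Error probability for independent uniform messages: fraction of message tuples
  for which some receiver decodes wrongly.\<close>
definition err_prob ::
  "nat \<Rightarrow> nat \<Rightarrow> (nat \<Rightarrow> real)
   \<Rightarrow> (nat \<Rightarrow> (nat \<Rightarrow> nat) \<Rightarrow> nat) \<Rightarrow> (nat \<Rightarrow> (nat \<Rightarrow> nat) \<Rightarrow> (nat \<Rightarrow> nat) \<Rightarrow> nat) \<Rightarrow> real" where
  "err_prob N n R f g =
     real (card {m \<in> msg_set N n R. \<exists>j\<in>{1..N}. g j (\<lambda>k. f k m) m \<noteq> m j})
       / real (card (msg_set N n R))"

definition achievable ::
  "nat \<Rightarrow> nat \<Rightarrow> (nat \<Rightarrow> nat set) \<Rightarrow> (nat \<Rightarrow> real) \<Rightarrow> (nat \<Rightarrow> nat set) \<Rightarrow> (nat \<Rightarrow> real) \<Rightarrow> bool" where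
  "achievable N K S C A R \<longleftrightarrow>
     (\<forall>j. 0 \<le> R j) \<and> (\<forall>j. j \<notin> {1..N} \<longrightarrow> R j = 0) \<and>
     (\<exists>f g. (\<forall>n. valid_code N K S C A n R (f n) (g n)) \<and>
            (\<lambda>n. err_prob N n R (f n) (g n)) \<longlonglongrightarrow> 0)"

text \<open>Capacity region: closure (product topology on nat => real, i.e. the usual topology on
  the N coordinates, all others being 0) of the set of achievable rate tuples.\<close>
definition capacity_region ::
  "nat \<Rightarrow> nat \<Rightarrow> (nat \<Rightarrow> nat set) \<Rightarrow> (nat \<Rightarrow> real) \<Rightarrow> (nat \<Rightarrow> nat set) \<Rightarrow> (nat \<Rightarrow> real) set" where
  "capacity_region N K S C A = closure {R. achievable N K S C A R}"

definition S6 :: "nat \<Rightarrow> nat set" where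
  "S6 k = (if k = 1 then {1,2,3} else if k = 2 then {2,3,4} else if k = 3 then {1,2}
           else if k = 4 then {2,4,5} else {})"

definition A6 :: "nat \<Rightarrow> nat set" where
  "A6 j = (if j = 1 then {4,5} else if j = 2 then {1,3,5} else if j = 3 then {1,2}
           else if j = 4 then {2,3,5} else if j = 5 then {3} else {})"

end

theory Submission
  imports Defs
begin

text \<open>If the side information graph restricted to a set \<open>T\<close> of receivers is acyclic,
  then the messages of \<open>T\<close> can be decoded one after another, in a topological order, from the
  messages outside \<open>T\<close> and the indices of the senders that know some message of \<open>T\<close>. So the
  correctly decoded message tuples are determined by these data, and counting them shows that
  the rates of \<open>T\<close> add up to at most the capacities of those senders. Each of the eight
  inequalities is such a bound.

  The region is down-closed, and its seven maximal vertices are the rate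
  vectors of seven one-shot XOR schemes in which every sender broadcasts a single bit. Time
  sharing of these schemes with total weight below one achieves every point \<open>s * R\<close>,
  \<open>0 < s < 1\<close>, of the region, and \<open>R\<close> itself lies in the closure.\<close>

section \<open>Message sets and correct decoding\<close>

lemma msg_set_bij_PiE:
  "bij_betw (\<lambda>m. restrict m {1..N}) (msg_set N n R)
     (\<Pi>\<^sub>E j\<in>{1..N}. {..<2 ^ nat \<lfloor>real n * R j\<rfloor>})"
proof (rule bij_betw_imageI)
  show "inj_on (\<lambda>m. restrict m {1..N}) (msg_set N n R)"
  proof (rule inj_onI, rule ext)
    fix m m' j assume "m \<in> msg_set N n R" "m' \<in> msg_set N n R"
      and "restrict m {1..N} = restrict m' {1..N}"
    then show "m j = m' j"
      unfolding msg_set_def by (cases "j \<in> {1..N}") (auto dest: fun_cong[of _ _ j])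
  qed
  have "p \<in> (\<lambda>m. restrict m {1..N}) ` msg_set N n R"
    if "p \<in> (\<Pi>\<^sub>E j\<in>{1..N}. {..<2 ^ nat \<lfloor>real n * R j\<rfloor>})" for p
  proof
    show "p = restrict (\<lambda>j. if j \<in> {1..N} then p j else 0) {1..N}"
      using that by (auto simp: PiE_def extensional_def)
  qed (use that in \<open>auto simp: msg_set_def\<close>)
  then show "(\<lambda>m. restrict m {1..N}) ` msg_set N n R
      = (\<Pi>\<^sub>E j\<in>{1..N}. {..<2 ^ nat \<lfloor>real n * R j\<rfloor>})"
    by (auto simp: msg_set_def)
qed

lemma finite_msg_set: "finite (msg_set N n R)"
  using bij_betw_finite[OF msg_set_bij_PiE] by (simp add: finite_PiE)

lemma card_msg_set: "card (msg_set N n R) = (\<Prod>j\<in>{1..N}. 2 ^ nat \<lfloor>real n * R j\<rfloor>)"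
  using bij_betw_same_card[OF msg_set_bij_PiE] by (simp add: card_PiE)

definition decoded_msgs ::
  "nat \<Rightarrow> nat \<Rightarrow> (nat \<Rightarrow> real) \<Rightarrow> (nat \<Rightarrow> (nat \<Rightarrow> nat) \<Rightarrow> nat)
   \<Rightarrow> (nat \<Rightarrow> (nat \<Rightarrow> nat) \<Rightarrow> (nat \<Rightarrow> nat) \<Rightarrow> nat) \<Rightarrow> (nat \<Rightarrow> nat) set" where
  "decoded_msgs N n R f g = {m \<in> msg_set N n R. \<forall>j\<in>{1..N}. g j (\<lambda>k. f k m) m = m j}"

lemma err_prob_eq_1_minus_decoded:
  "err_prob N n R f g = 1 - card (decoded_msgs N n R f g) / card (msg_set N n R)"
proof -
  have sub: "decoded_msgs N n R f g \<subseteq> msg_set N n R"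
    by (auto simp: decoded_msgs_def)
  have "{m \<in> msg_set N n R. \<exists>j\<in>{1..N}. g j (\<lambda>k. f k m) m \<noteq> m j}
      = msg_set N n R - decoded_msgs N n R f g"
    by (auto simp: decoded_msgs_def)
  then have "err_prob N n R f g
      = (real (card (msg_set N n R)) - card (decoded_msgs N n R f g)) / card (msg_set N n R)"
    using sub finite_msg_set card_mono[OF finite_msg_set sub]
    by (simp add: err_prob_def card_Diff_subset finite_subset of_nat_diff)
  also have "\<dots> = 1 - card (decoded_msgs N n R f g) / card (msg_set N n R)"
    by (simp add: diff_divide_distrib card_msg_set)
  finally show ?thesis .
qed

lemma valid_code_enc_local:
  "valid_code N K S C A n R f g \<Longrightarrow> k \<in> {1..K} \<Longrightarrow> \<forall>i\<in>S k. m i = m' i \<Longrightarrow> f k m = f k m'"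
  unfolding valid_code_def by blast

lemma valid_code_enc_less:
  "valid_code N K S C A n R f g \<Longrightarrow> k \<in> {1..K} \<Longrightarrow> m \<in> msg_set N n R
    \<Longrightarrow> f k m < 2 ^ nat \<lfloor>real n * C k\<rfloor>"
  unfolding valid_code_def by blast

lemma valid_code_dec_local:
  "valid_code N K S C A n R f g \<Longrightarrow> j \<in> {1..N} \<Longrightarrow> \<forall>k\<in>{1..K}. l k = l' k
    \<Longrightarrow> \<forall>i\<in>A j. m i = m' i \<Longrightarrow> g j l m = g j l' m'"
  unfolding valid_code_def by blast

section \<open>The acyclic cut-set bound\<close>

definition acyclic_side_info :: "(nat \<Rightarrow> nat set) \<Rightarrow> nat set \<Rightarrow> bool" where
  "acyclic_side_info A T \<longleftrightarrow> (\<exists>level :: nat \<Rightarrow> nat. \<forall>j\<in>T. \<forall>i\<in>A j \<inter> T. level i < level j)"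

lemma decoded_msgs_eq_if_agree_outside:
  assumes V: "valid_code N K S C A n R f g"
    and m: "m \<in> decoded_msgs N n R f g" and m': "m' \<in> decoded_msgs N n R f g"
    and T: "T \<subseteq> {1..N}" and acyclic: "acyclic_side_info A T"
    and outside: "\<forall>i. i \<notin> T \<longrightarrow> m i = m' i"
    and cut: "\<forall>k\<in>{1..K}. S k \<inter> T \<noteq> {} \<longrightarrow> f k m = f k m'"
  shows "m = m'"
proof -
  obtain level :: "nat \<Rightarrow> nat" where level: "\<forall>j\<in>T. \<forall>i\<in>A j \<inter> T. level i < level j"
    using acyclic unfolding acyclic_side_info_def by blast
  have idx: "\<forall>k\<in>{1..K}. f k m = f k m'"
  proof
    fix k assume k: "k \<in> {1..K}"
    show "f k m = f k m'"
    proof (cases "S k \<inter> T = {}")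
      case True
      then have "\<forall>i\<in>S k. m i = m' i"
        using outside by auto
      then show ?thesis
        by (rule valid_code_enc_local[OF V k])
    next
      case False
      then show ?thesis
        using cut k by simp
    qed
  qed
  have "m j = m' j" for j
  proof (induction j rule: measure_induct_rule[of level])
    case (less j)
    show ?case
    proof (cases "j \<in> T")
      case True
      have "m i = m' i" if "i \<in> A j" for i
        using level True that less.IH outside by (cases "i \<in> T") simp_all
      then have "g j (\<lambda>k. f k m) m = g j (\<lambda>k. f k m') m'"
        using valid_code_dec_local[OF V _ idx] True T by blast
      then show ?thesis
        using m m' True T by (auto simp: decoded_msgs_def)
    next
      case False
      then show ?thesis
        using outside by simp
    qed
  qed
  then show ?thesis
    by blast
qed

lemma card_decoded_msgs_le:
  assumes V: "valid_code N K S C A n R f g"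
    and T: "T \<subseteq> {1..N}" and acyclic: "acyclic_side_info A T"
  defines "Q \<equiv> {k \<in> {1..K}. S k \<inter> T \<noteq> {}}"
  shows "card (decoded_msgs N n R f g) * (\<Prod>j\<in>T. 2 ^ nat \<lfloor>real n * R j\<rfloor>)
    \<le> card (msg_set N n R) * (\<Prod>k\<in>Q. 2 ^ nat \<lfloor>real n * C k\<rfloor>)"
proof -
  define B where "B j = {..<(2::nat) ^ nat \<lfloor>real n * R j\<rfloor>}" for j
  define L where "L k = {..<(2::nat) ^ nat \<lfloor>real n * C k\<rfloor>}" for k
  define \<Phi> where "\<Phi> m = (restrict m ({1..N} - T), restrict (\<lambda>k. f k m) Q)" for m
  have fin: "finite Q"
    by (simp add: Q_def)
  have "inj_on \<Phi> (decoded_msgs N n R f g)"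
  proof (rule inj_onI)
    fix m m' assume m: "m \<in> decoded_msgs N n R f g" and m': "m' \<in> decoded_msgs N n R f g"
      and "\<Phi> m = \<Phi> m'"
    then have "\<forall>i\<in>{1..N} - T. m i = m' i" and cut: "\<forall>k\<in>Q. f k m = f k m'"
      unfolding \<Phi>_def by (metis Pair_inject restrict_apply')+
    moreover have "\<forall>i. i \<notin> {1..N} \<longrightarrow> m i = m' i"
      using m m' by (simp add: decoded_msgs_def msg_set_def)
    ultimately have outside: "\<forall>i. i \<notin> T \<longrightarrow> m i = m' i"
      by blast
    show "m = m'"
      using cut by (intro decoded_msgs_eq_if_agree_outside[OF V m m' T acyclic outside])
        (auto simp: Q_def)
  qed
  moreover have "\<Phi> ` decoded_msgs N n R f g \<subseteq> PiE ({1..N} - T) B \<times> PiE Q L"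
  proof
    fix y assume "y \<in> \<Phi> ` decoded_msgs N n R f g"
    then obtain m where m: "m \<in> msg_set N n R" and y: "y = \<Phi> m"
      by (auto simp: decoded_msgs_def)
    have "f k m \<in> L k" if "k \<in> Q" for k
      using valid_code_enc_less[OF V] m that by (simp add: Q_def L_def)
    then show "y \<in> PiE ({1..N} - T) B \<times> PiE Q L"
      using m by (auto simp: y \<Phi>_def msg_set_def B_def)
  qed
  ultimately have "card (decoded_msgs N n R f g) \<le> card (PiE ({1..N} - T) B \<times> PiE Q L)"
    by (intro card_inj_on_le) (auto simp: fin finite_PiE B_def L_def)
  also have "\<dots> = (\<Prod>j\<in>{1..N} - T. 2 ^ nat \<lfloor>real n * R j\<rfloor>) * (\<Prod>k\<in>Q. 2 ^ nat \<lfloor>real n * C k\<rfloor>)"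
    by (simp add: card_cartesian_product card_PiE fin B_def L_def)
  finally have "card (decoded_msgs N n R f g) * (\<Prod>j\<in>T. 2 ^ nat \<lfloor>real n * R j\<rfloor>)
    \<le> (\<Prod>j\<in>{1..N} - T. 2 ^ nat \<lfloor>real n * R j\<rfloor>) * (\<Prod>k\<in>Q. 2 ^ nat \<lfloor>real n * C k\<rfloor>)
       * (\<Prod>j\<in>T. 2 ^ nat \<lfloor>real n * R j\<rfloor>)"
    by (rule mult_right_mono) simp
  also have "\<dots> = card (msg_set N n R) * (\<Prod>k\<in>Q. 2 ^ nat \<lfloor>real n * C k\<rfloor>)"
    using prod.subset_diff[OF T, of "\<lambda>j. (2::nat) ^ nat \<lfloor>real n * R j\<rfloor>"]
    by (simp add: card_msg_set)
  finally show ?thesis .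
qed

lemma powr_le_two_pow_nat_floor: "0 \<le> x \<Longrightarrow> 2 powr (x - 1) \<le> (2::real) ^ nat \<lfloor>x\<rfloor>"
proof -
  assume "0 \<le> x"
  then have "2 powr (x - 1) \<le> 2 powr real (nat \<lfloor>x\<rfloor>)"
    by (intro powr_mono) linarith+
  then show ?thesis
    by (simp add: powr_realpow)
qed

lemma two_pow_nat_floor_le_powr: "0 \<le> x \<Longrightarrow> (2::real) ^ nat \<lfloor>x\<rfloor> \<le> 2 powr x"
proof -
  assume "0 \<le> x"
  then have "2 powr real (nat \<lfloor>x\<rfloor>) \<le> 2 powr x"
    by (intro powr_mono) linarith+
  then show ?thesis
    by (simp add: powr_realpow)
qed

lemma one_minus_err_prob_le:
  assumes V: "valid_code N K S C A n R f g"
    and T: "T \<subseteq> {1..N}" and acyclic: "acyclic_side_info A T"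
    and C_nonneg: "\<forall>k\<in>{1..K}. 0 \<le> C k" and R_nonneg: "\<forall>j\<in>T. 0 \<le> R j"
  defines "Q \<equiv> {k \<in> {1..K}. S k \<inter> T \<noteq> {}}"
  shows "1 - err_prob N n R f g \<le> 2 powr (card T + real n * ((\<Sum>k\<in>Q. C k) - (\<Sum>j\<in>T. R j)))"
proof -
  let ?D = "real (card (decoded_msgs N n R f g))"
  let ?M = "real (card (msg_set N n R))"
  let ?PT = "\<Prod>j\<in>T. 2 ^ nat \<lfloor>real n * R j\<rfloor> :: real"
  let ?PQ = "\<Prod>k\<in>Q. 2 ^ nat \<lfloor>real n * C k\<rfloor> :: real"
  have fin: "finite T" "finite Q"
    using T finite_subset by (auto simp: Q_def)
  have "real (card (decoded_msgs N n R f g) * (\<Prod>j\<in>T. 2 ^ nat \<lfloor>real n * R j\<rfloor>))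
    \<le> real (card (msg_set N n R) * (\<Prod>k\<in>Q. 2 ^ nat \<lfloor>real n * C k\<rfloor>))"
    using card_decoded_msgs_le[OF V T acyclic] unfolding Q_def of_nat_le_iff .
  then have "?D * ?PT \<le> ?M * ?PQ"
    by simp
  moreover have "0 < ?M" "0 < ?PT"
    by (simp_all add: card_msg_set prod_pos)
  ultimately have "?D / ?M \<le> ?PQ / ?PT"
    by (simp add: field_simps)
  also have "\<dots> \<le> 2 powr (real n * (\<Sum>k\<in>Q. C k)) / 2 powr (real n * (\<Sum>j\<in>T. R j) - card T)"
  proof (rule frac_le)
    have "?PQ \<le> (\<Prod>k\<in>Q. 2 powr (real n * C k))"
      using C_nonneg by (intro prod_mono) (auto simp: Q_def intro!: two_pow_nat_floor_le_powr)
    then show "?PQ \<le> 2 powr (real n * (\<Sum>k\<in>Q. C k))"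
      by (simp add: powr_sum fin sum_distrib_left)
    have "2 powr (real n * (\<Sum>j\<in>T. R j) - card T) = 2 powr (\<Sum>j\<in>T. real n * R j - 1)"
      by (simp add: sum_distrib_left sum_subtractf)
    also have "\<dots> = (\<Prod>j\<in>T. 2 powr (real n * R j - 1))"
      by (rule powr_sum) simp
    also have "\<dots> \<le> ?PT"
      using R_nonneg by (intro prod_mono) (auto intro!: powr_le_two_pow_nat_floor)
    finally show "2 powr (real n * (\<Sum>j\<in>T. R j) - card T) \<le> ?PT" .
  qed simp_all
  also have "\<dots> = 2 powr (card T + real n * ((\<Sum>k\<in>Q. C k) - (\<Sum>j\<in>T. R j)))"
    by (simp add: powr_diff [symmetric] algebra_simps)
  finally show ?thesis
    by (simp add: err_prob_eq_1_minus_decoded)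
qed

lemma achievable_acyclic_cut_bound:
  assumes ach: "achievable N K S C A R"
    and T: "T \<subseteq> {1..N}" and acyclic: "acyclic_side_info A T"
    and C_nonneg: "\<forall>k\<in>{1..K}. 0 \<le> C k"
  shows "(\<Sum>j\<in>T. R j) \<le> (\<Sum>k\<in>{k \<in> {1..K}. S k \<inter> T \<noteq> {}}. C k)"
proof (rule ccontr)
  define q where "q = 2 powr ((\<Sum>k\<in>{k \<in> {1..K}. S k \<inter> T \<noteq> {}}. C k) - (\<Sum>j\<in>T. R j))"
  assume "\<not> ?thesis"
  then have "q < 2 powr 0"
    unfolding q_def by (intro powr_less_mono) auto
  from ach obtain f g where R_nonneg: "\<forall>j. 0 \<le> R j"
    and V: "\<And>n. valid_code N K S C A n R (f n) (g n)"
    and err: "(\<lambda>n. err_prob N n R (f n) (g n)) \<longlonglongrightarrow> 0"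
    unfolding achievable_def by blast
  have success_le: "1 - err_prob N n R (f n) (g n) \<le> 2 powr card T * q ^ n" for n
    using one_minus_err_prob_le[OF V T acyclic C_nonneg] R_nonneg
    by (simp add: q_def powr_add powr_powr powr_realpow [symmetric] mult.commute)
  have "(\<lambda>n. 1 - err_prob N n R (f n) (g n)) \<longlonglongrightarrow> 1"
    using tendsto_diff[OF tendsto_const err, of 1] by simp
  moreover have "(\<lambda>n. 2 powr card T * q ^ n) \<longlonglongrightarrow> 0"
    using \<open>q < 2 powr 0\<close> by (intro tendsto_mult_right_zero LIMSEQ_power_zero) (simp_all add: q_def)
  ultimately have "1 \<le> (0::real)"
    by (rule LIMSEQ_le) (use success_le in blast)
  then show False
    by simp
qed

section \<open>Achievability by time sharing of one-bit schemes\<close>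

lemma valid_code_of_determined_encoder:
  assumes local: "\<forall>k\<in>{1..K}. \<forall>m m'. (\<forall>i\<in>S k. m i = m' i) \<longrightarrow> f k m = f k m'"
    and bounded: "\<forall>k\<in>{1..K}. \<forall>m\<in>msg_set N n R. f k m < 2 ^ nat \<lfloor>real n * C k\<rfloor>"
    and determined: "\<forall>j\<in>{1..N}. \<forall>m\<in>msg_set N n R. \<forall>m'\<in>msg_set N n R.
      (\<forall>k\<in>{1..K}. f k m = f k m') \<and> (\<forall>i\<in>A j. m i = m' i) \<longrightarrow> m j = m' j"
  obtains g where "valid_code N K S C A n R f g" "err_prob N n R f g = 0"
proof
  define consistent where "consistent j l m m' \<longleftrightarrow>
    m' \<in> msg_set N n R \<and> (\<forall>k\<in>{1..K}. f k m' = l k) \<and> (\<forall>i\<in>A j. m' i = m i)" for j l m m'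
  define g where "g j l m = (SOME m'. consistent j l m m') j" for j l m
  have "g j l m = g j l' m'"
    if "\<forall>k\<in>{1..K}. l k = l' k" "\<forall>i\<in>A j. m i = m' i" for j l l' m m'
  proof -
    have "consistent j l m = consistent j l' m'"
      using that by (auto simp: consistent_def)
    then show ?thesis
      by (simp add: g_def)
  qed
  then show "valid_code N K S C A n R f g"
    using local bounded by (auto simp: valid_code_def)
  have "g j (\<lambda>k. f k m) m = m j" if "m \<in> msg_set N n R" "j \<in> {1..N}" for j m
  proof -
    have "consistent j (\<lambda>k. f k m) m m"
      using that by (simp add: consistent_def)
    then have "consistent j (\<lambda>k. f k m) m (SOME m'. consistent j (\<lambda>k. f k m) m m')"
      by (rule someI[of "consistent j (\<lambda>k. f k m) m"])
    then show ?thesis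
      using that determined by (simp add: g_def consistent_def)
  qed
  then have "decoded_msgs N n R f g = msg_set N n R"
    by (auto simp: decoded_msgs_def)
  then show "err_prob N n R f g = 0"
    by (simp add: err_prob_eq_1_minus_decoded card_msg_set)
qed

text \<open>\<open>x i b\<close> is bit \<open>b\<close> of message \<open>i\<close>. Instead of a decoder, the definition asks that the
  broadcast bits and the side information of receiver \<open>j\<close> determine the first \<open>bits j\<close> bits of
  its message.\<close>

definition one_bit_scheme ::
  "nat \<Rightarrow> nat \<Rightarrow> (nat \<Rightarrow> nat set) \<Rightarrow> (nat \<Rightarrow> nat set) \<Rightarrow> (nat \<Rightarrow> (nat \<Rightarrow> nat \<Rightarrow> bool) \<Rightarrow> bool)
   \<Rightarrow> (nat \<Rightarrow> nat) \<Rightarrow> bool" where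
  "one_bit_scheme N K S A enc bits \<longleftrightarrow>
     (\<forall>k\<in>{1..K}. \<forall>x x'. (\<forall>i\<in>S k. x i = x' i) \<longrightarrow> enc k x = enc k x') \<and>
     (\<forall>j\<in>{1..N}. \<forall>x x'. (\<forall>k\<in>{1..K}. enc k x = enc k x') \<and> (\<forall>i\<in>A j. x i = x' i)
        \<longrightarrow> (\<forall>b<bits j. x j b = x' j b))"

lemma one_bit_scheme_local:
  "one_bit_scheme N K S A enc bits \<Longrightarrow> k \<in> {1..K} \<Longrightarrow> \<forall>i\<in>S k. x i = x' i \<Longrightarrow> enc k x = enc k x'"
  unfolding one_bit_scheme_def by blast

lemma one_bit_scheme_decodes:
  "one_bit_scheme N K S A enc bits \<Longrightarrow> j \<in> {1..N} \<Longrightarrow> \<forall>k\<in>{1..K}. enc k x = enc k x'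
    \<Longrightarrow> \<forall>i\<in>A j. x i = x' i \<Longrightarrow> b < bits j \<Longrightarrow> x j b = x' j b"
  unfolding one_bit_scheme_def by blast

text \<open>Running the schemes \<open>ts ! 0, ts ! 1, \<dots>\<close> one after the other: block \<open>c\<close> carries the next
  \<open>bits (ts ! c) j\<close> bits of each message \<open>j\<close>, and bit \<open>c\<close> of the index of sender \<open>k\<close> is
  its bit in block \<open>c\<close>.\<close>

definition block_offset :: "(nat \<Rightarrow> nat \<Rightarrow> nat) \<Rightarrow> nat list \<Rightarrow> nat \<Rightarrow> nat \<Rightarrow> nat" where
  "block_offset bits ts j c = (\<Sum>c'<c. bits (ts ! c') j)"

definition block_input ::
  "(nat \<Rightarrow> nat \<Rightarrow> nat) \<Rightarrow> nat list \<Rightarrow> (nat \<Rightarrow> nat) \<Rightarrow> nat \<Rightarrow> nat \<Rightarrow> nat \<Rightarrow> bool" where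
  "block_input bits ts m c = (\<lambda>j b. bit (m j) (block_offset bits ts j c + b))"

definition time_shared_enc ::
  "(nat \<Rightarrow> nat \<Rightarrow> (nat \<Rightarrow> nat \<Rightarrow> bool) \<Rightarrow> bool) \<Rightarrow> (nat \<Rightarrow> nat \<Rightarrow> nat) \<Rightarrow> nat list
   \<Rightarrow> nat \<Rightarrow> (nat \<Rightarrow> nat) \<Rightarrow> nat" where
  "time_shared_enc enc bits ts k m =
     horner_sum of_bool 2 (map (\<lambda>c. enc (ts ! c) k (block_input bits ts m c)) [0..<length ts])"

lemma bit_time_shared_enc:
  "c < length ts \<Longrightarrow> bit (time_shared_enc enc bits ts k m) c = enc (ts ! c) k (block_input bits ts m c)"
  by (simp add: time_shared_enc_def bit_horner_sum_bit_iff)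

lemma time_shared_enc_less: "time_shared_enc enc bits ts k m < 2 ^ length ts"
  using horner_sum_of_bool_2_less[of "map (\<lambda>c. enc (ts ! c) k (block_input bits ts m c)) [0..<length ts]"]
  by (simp add: time_shared_enc_def)

lemma block_offset_length: "block_offset bits ts j (length ts) = (\<Sum>t\<leftarrow>ts. bits t j)"
  by (simp add: block_offset_def sum_list_sum_nth atLeast0LessThan)

lemma exists_block_of_less_sum:
  fixes w :: "nat \<Rightarrow> nat"
  assumes "p < (\<Sum>c<L. w c)"
  shows "\<exists>c<L. \<exists>b<w c. p = (\<Sum>c'<c. w c') + b"
  using assms
proof (induction L)
  case (Suc L)
  show ?case
  proof (cases "p < (\<Sum>c<L. w c)")
    case True
    then show ?thesis
      using Suc.IH less_Suc_eq by blast
  next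
    case False
    then show ?thesis
      using Suc.prems by (intro exI[of _ L]) (auto intro!: exI[of _ "p - (\<Sum>c<L. w c)"])
  qed
qed simp

lemma nat_eq_if_bits_eq_below:
  fixes a b :: nat
  assumes "a < 2 ^ L" "b < 2 ^ L" "\<And>p. p < L \<Longrightarrow> bit a p = bit b p"
  shows "a = b"
proof -
  have "take_bit L a = take_bit L b"
    using assms(3) by (intro bit_eqI) (auto simp: bit_take_bit_iff)
  then show ?thesis
    using assms(1,2) by (simp add: take_bit_nat_eq_self)
qed

lemma time_shared_enc_local:
  assumes "\<forall>t\<in>set ts. one_bit_scheme N K S A (enc t) (bits t)" "k \<in> {1..K}"
    and "\<forall>i\<in>S k. m i = m' i"
  shows "time_shared_enc enc bits ts k m = time_shared_enc enc bits ts k m'"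
proof -
  have "enc (ts ! c) k (block_input bits ts m c) = enc (ts ! c) k (block_input bits ts m' c)"
    if "c < length ts" for c
  proof (rule one_bit_scheme_local[of N K S A "enc (ts ! c)" "bits (ts ! c)"])
    show "one_bit_scheme N K S A (enc (ts ! c)) (bits (ts ! c))"
      using assms(1) that by simp
    show "\<forall>i\<in>S k. block_input bits ts m c i = block_input bits ts m' c i"
      using assms(3) by (simp add: block_input_def)
  qed (rule assms(2))
  then show ?thesis
    unfolding time_shared_enc_def by (intro arg_cong[where f = "horner_sum of_bool 2"] map_cong) auto
qed

lemma time_shared_enc_determines_bit:
  assumes schemes: "\<forall>t\<in>set ts. one_bit_scheme N K S A (enc t) (bits t)" and j: "j \<in> {1..N}"
    and idx: "\<forall>k\<in>{1..K}. time_shared_enc enc bits ts k m = time_shared_enc enc bits ts k m'"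
    and side: "\<forall>i\<in>A j. m i = m' i"
    and p: "p < block_offset bits ts j (length ts)"
  shows "bit (m j) p = bit (m' j) p"
proof -
  obtain c b where c: "c < length ts" and b: "b < bits (ts ! c) j"
    and p_eq: "p = block_offset bits ts j c + b"
    using exists_block_of_less_sum[where w = "\<lambda>c. bits (ts ! c) j"] p
    unfolding block_offset_def by blast
  have "enc (ts ! c) k (block_input bits ts m c) = enc (ts ! c) k (block_input bits ts m' c)"
    if "k \<in> {1..K}" for k
  proof -
    have "bit (time_shared_enc enc bits ts k m) c = bit (time_shared_enc enc bits ts k m') c"
      using idx that by simp
    then show ?thesis
      by (simp add: bit_time_shared_enc[OF c])
  qed
  moreover have "\<forall>i\<in>A j. block_input bits ts m c i = block_input bits ts m' c i"
    using side by (simp add: block_input_def)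
  moreover have "one_bit_scheme N K S A (enc (ts ! c)) (bits (ts ! c))"
    using schemes c by simp
  ultimately have "block_input bits ts m c j b = block_input bits ts m' c j b"
    using one_bit_scheme_decodes j b by blast
  then show ?thesis
    by (simp add: block_input_def p_eq)
qed

lemma time_shared_code:
  assumes schemes: "\<forall>t\<in>set ts. one_bit_scheme N K S A (enc t) (bits t)"
    and short: "\<forall>k\<in>{1..K}. length ts \<le> nat \<lfloor>real n * C k\<rfloor>"
    and enough_bits: "\<forall>j\<in>{1..N}. nat \<lfloor>real n * R j\<rfloor> \<le> block_offset bits ts j (length ts)"
  obtains g where "valid_code N K S C A n R (time_shared_enc enc bits ts) g"
    "err_prob N n R (time_shared_enc enc bits ts) g = 0"
proof (rule valid_code_of_determined_encoder)
  show "\<forall>k\<in>{1..K}. \<forall>m m'. (\<forall>i\<in>S k. m i = m' i)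
      \<longrightarrow> time_shared_enc enc bits ts k m = time_shared_enc enc bits ts k m'"
    using time_shared_enc_local[OF schemes] by blast
  show "\<forall>k\<in>{1..K}. \<forall>m\<in>msg_set N n R. time_shared_enc enc bits ts k m < 2 ^ nat \<lfloor>real n * C k\<rfloor>"
  proof (intro ballI)
    fix k m assume k: "k \<in> {1..K}"
    have "time_shared_enc enc bits ts k m < 2 ^ length ts"
      by (rule time_shared_enc_less)
    also have "\<dots> \<le> 2 ^ nat \<lfloor>real n * C k\<rfloor>"
      using short k by (intro power_increasing) auto
    finally show "time_shared_enc enc bits ts k m < 2 ^ nat \<lfloor>real n * C k\<rfloor>" .
  qed
  show "\<forall>j\<in>{1..N}. \<forall>m\<in>msg_set N n R. \<forall>m'\<in>msg_set N n R.
      (\<forall>k\<in>{1..K}. time_shared_enc enc bits ts k m = time_shared_enc enc bits ts k m')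
      \<and> (\<forall>i\<in>A j. m i = m' i) \<longrightarrow> m j = m' j"
  proof (intro ballI impI, elim conjE)
    fix j m m' assume j: "j \<in> {1..N}" and m: "m \<in> msg_set N n R" "m' \<in> msg_set N n R"
      and idx: "\<forall>k\<in>{1..K}. time_shared_enc enc bits ts k m = time_shared_enc enc bits ts k m'"
      and side: "\<forall>i\<in>A j. m i = m' i"
    have "bit (m j) p = bit (m' j) p" if "p < nat \<lfloor>real n * R j\<rfloor>" for p
    proof (rule time_shared_enc_determines_bit[OF schemes j idx side])
      show "p < block_offset bits ts j (length ts)"
        using that enough_bits j by (meson less_le_trans)
    qed
    moreover have "m j < 2 ^ nat \<lfloor>real n * R j\<rfloor>" "m' j < 2 ^ nat \<lfloor>real n * R j\<rfloor>"
      using m j by (simp_all add: msg_set_def)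
    ultimately show "m j = m' j"
      by (intro nat_eq_if_bits_eq_below) auto
  qed
qed

definition schedule :: "(nat \<Rightarrow> real) \<Rightarrow> nat \<Rightarrow> nat \<Rightarrow> nat list" where
  "schedule w T n = concat (map (\<lambda>t. replicate (nat \<lceil>real n * w t\<rceil>) t) [0..<T])"

lemma set_schedule: "set (schedule w T n) \<subseteq> {..<T}"
  by (auto simp: schedule_def)

lemma sum_list_map_schedule:
  "(\<Sum>t\<leftarrow>schedule w T n. h t) = (\<Sum>t<T. nat \<lceil>real n * w t\<rceil> * h t)"
  by (induction T) (simp_all add: schedule_def sum_list_replicate)

lemma length_schedule_le:
  assumes "\<forall>t<T. 0 \<le> w t"
  shows "real (length (schedule w T n)) \<le> real n * (\<Sum>t<T. w t) + T"
proof -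
  have "real (length (schedule w T n)) = (\<Sum>t<T. real (nat \<lceil>real n * w t\<rceil>))"
    using sum_list_map_schedule[of "\<lambda>_. 1::nat" w T n] by (simp add: sum_list_triv)
  also have "\<dots> \<le> (\<Sum>t<T. real n * w t + 1)"
    using assms by (intro sum_mono) (simp add: of_nat_ceiling)
  finally show ?thesis
    by (simp add: sum.distrib sum_distrib_left)
qed

lemma block_offset_schedule_ge:
  assumes "\<forall>t<T. 0 \<le> w t"
  shows "real n * (\<Sum>t<T. w t * bits t j)
    \<le> block_offset bits (schedule w T n) j (length (schedule w T n))"
proof -
  have "real n * (\<Sum>t<T. w t * bits t j) \<le> (\<Sum>t<T. real (nat \<lceil>real n * w t\<rceil>) * bits t j)"
    unfolding sum_distrib_left
    using assms by (intro sum_mono) (auto simp: mult.assoc[symmetric] intro!: mult_right_mono)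
  also have "\<dots> = block_offset bits (schedule w T n) j (length (schedule w T n))"
    by (simp add: block_offset_length sum_list_map_schedule)
  finally show ?thesis .
qed

lemma eventually_length_schedule_le:
  assumes w_nonneg: "\<forall>t<T. 0 \<le> w t" and w_sum: "(\<Sum>t<T. w t) < c"
  shows "eventually (\<lambda>n. length (schedule w T n) \<le> nat \<lfloor>real n * c\<rfloor>) sequentially"
proof -
  define d where "d = c - (\<Sum>t<T. w t)"
  have d: "0 < d"
    using w_sum by (simp add: d_def)
  obtain n0 :: nat where "T / d < n0"
    using reals_Archimedean2 by blast
  then have "T \<le> real n0 * d"
    using d by (simp add: pos_divide_less_eq)
  then have "T \<le> real n * d" if "n0 \<le> n" for n
    using d that by (meson mult_right_mono of_nat_mono order.trans less_imp_le)
  then have "real (length (schedule w T n)) \<le> real n * c" if "n0 \<le> n" for n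
    using length_schedule_le[OF w_nonneg, of n] that by (force simp: d_def algebra_simps)
  then show ?thesis
    unfolding eventually_sequentially by (blast intro: le_nat_floor)
qed

lemma achievable_by_time_sharing:
  fixes w :: "nat \<Rightarrow> real"
  assumes schemes: "\<forall>t<T. one_bit_scheme N K S A (enc t) (bits t)"
    and w_nonneg: "\<forall>t<T. 0 \<le> w t" and w_sum: "\<forall>k\<in>{1..K}. (\<Sum>t<T. w t) < C k"
    and R_nonneg: "\<forall>j. 0 \<le> R j" and R_supp: "\<forall>j. j \<notin> {1..N} \<longrightarrow> R j = 0"
    and R_le: "\<forall>j\<in>{1..N}. R j \<le> (\<Sum>t<T. w t * bits t j)"
  shows "achievable N K S C A R"
proof -
  define fits where "fits n \<longleftrightarrow> (\<forall>k\<in>{1..K}. length (schedule w T n) \<le> nat \<lfloor>real n * C k\<rfloor>)" for n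
  have "eventually fits sequentially"
    unfolding fits_def using eventually_length_schedule_le[OF w_nonneg] w_sum
    by (intro eventually_ball_finite) auto
  have "\<exists>f g. valid_code N K S C A n R f g \<and> (fits n \<longrightarrow> err_prob N n R f g = 0)" for n
  proof (cases "fits n")
    case True
    have "\<forall>t\<in>set (schedule w T n). one_bit_scheme N K S A (enc t) (bits t)"
      using schemes set_schedule by blast
    moreover have "nat \<lfloor>real n * R j\<rfloor> \<le> block_offset bits (schedule w T n) j (length (schedule w T n))"
      if "j \<in> {1..N}" for j
      using mult_left_mono[OF bspec[OF R_le that], of "real n"]
        block_offset_schedule_ge[OF w_nonneg, of n bits j]
      by (simp add: nat_le_iff floor_le_iff)
    ultimately show ?thesis
      using time_shared_code[of "schedule w T n"] True unfolding fits_def by metis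
  next
    case False
    then show ?thesis
      by (intro exI[of _ "\<lambda>k m. 0"] exI[of _ "\<lambda>j l m. 0"]) (simp add: valid_code_def)
  qed
  then obtain f g where code: "\<And>n. valid_code N K S C A n R (f n) (g n)"
    "\<And>n. fits n \<Longrightarrow> err_prob N n R (f n) (g n) = 0"
    by metis
  have "(\<lambda>n. err_prob N n R (f n) (g n)) \<longlonglongrightarrow> 0"
    by (rule tendsto_eventually) (use \<open>eventually fits sequentially\<close> code(2) in \<open>auto elim: eventually_mono\<close>)
  then show ?thesis
    unfolding achievable_def using R_nonneg R_supp code(1) by blast
qed

lemma mem_closure_if_scaled_mem:
  fixes R :: "'a \<Rightarrow> real"
  assumes "\<And>s. 0 < s \<Longrightarrow> s < 1 \<Longrightarrow> (\<lambda>j. s * R j) \<in> X"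
  shows "R \<in> closure X"
proof -
  define h where "h s = (\<lambda>j. s * R j)" for s :: real
  have "continuous_on UNIV h"
    unfolding h_def by (intro continuous_on_coordinatewise_then_product continuous_intros)
  then have "(h \<longlongrightarrow> h 1) (at_left 1)"
    by (simp add: continuous_on_def tendsto_mono[OF at_le[OF subset_UNIV]])
  moreover have "eventually (\<lambda>s. h s \<in> X) (at_left 1)"
    using eventually_at_left_real[of 0 1] by (rule eventually_mono) (auto simp: h_def intro: assms)
  ultimately have "h 1 \<in> closure X"
    by (intro Lim_in_closed_set[OF closed_closure])
      (auto elim: eventually_mono intro: closure_subset[THEN subsetD])
  then show ?thesis
    by (simp add: h_def)
qed

section \<open>The five-message instance\<close>

text \<open>Row \<open>t\<close> lists the bits broadcast by senders 1 to 4 in scheme \<open>t\<close> (\<open>\<noteq>\<close> is XOR), and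
  \<open>scheme_bits t\<close> lists how many bits of messages 1 to 5 the scheme delivers. These seven rate
  vectors are the maximal vertices of the capacity region; schemes 3 to 6 are those that carry
  message 5.\<close>

definition scheme_enc :: "nat \<Rightarrow> nat \<Rightarrow> (nat \<Rightarrow> nat \<Rightarrow> bool) \<Rightarrow> bool" where
  "scheme_enc t k x =
    [[x 2 0 \<noteq> x 3 0, x 2 1 \<noteq> x 3 1, x 2 2, x 2 3],
     [x 2 1 \<noteq> x 3 0, x 2 2 \<noteq> x 3 1, x 1 0 \<noteq> x 2 0, x 2 0 \<noteq> x 4 0],
     [x 1 1 \<noteq> (x 2 1 \<noteq> x 3 0), x 2 1 \<noteq> (x 3 0 \<noteq> x 4 1), x 1 0 \<noteq> x 2 0, x 2 0 \<noteq> x 4 0],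
     [x 2 0 \<noteq> x 3 0, x 2 1 \<noteq> x 3 1, x 2 2, x 5 0],
     [x 2 0 \<noteq> x 3 0, x 2 1 \<noteq> x 3 1, x 1 0, x 5 0],
     [x 2 1 \<noteq> x 3 0, x 2 0 \<noteq> x 4 0, x 1 0 \<noteq> x 2 0, x 5 0],
     [x 1 1 \<noteq> (x 2 0 \<noteq> x 3 0), x 2 0 \<noteq> (x 3 0 \<noteq> x 4 0), x 1 0, x 2 0 \<noteq> (x 4 0 \<noteq> x 5 0)]]
    ! t ! (k - 1)"

definition scheme_bits :: "nat \<Rightarrow> nat \<Rightarrow> nat" where
  "scheme_bits t j =
    [[0, 4, 2, 0, 0], [1, 3, 2, 1, 0], [2, 2, 1, 2, 0], [0, 3, 2, 0, 1],
     [1, 2, 2, 0, 1], [1, 2, 1, 1, 1], [2, 1, 1, 1, 1]] ! t ! (j - 1)"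

lemma one_bit_scheme_instance:
  assumes "t < 7"
  shows "one_bit_scheme 5 4 S6 A6 (scheme_enc t) (scheme_bits t)"
proof -
  have senders: "{1..4::nat} = {1, 2, 3, 4}" and receivers: "{1..5::nat} = {1, 2, 3, 4, 5}"
    by auto
  have less: "(b::nat) < 1 \<longleftrightarrow> b = 0" "b < 2 \<longleftrightarrow> b = 0 \<or> b = 1"
    "b < 3 \<longleftrightarrow> b = 0 \<or> b = 1 \<or> b = 2" "b < 4 \<longleftrightarrow> b = 0 \<or> b = 1 \<or> b = 2 \<or> b = 3" for b
    by auto
  from assms consider "t = 0" | "t = 1" | "t = 2" | "t = 3" | "t = 4" | "t = 5" | "t = 6"
    by linarith
  then show ?thesis
    unfolding one_bit_scheme_def senders receivers
    by cases (simp add: S6_def A6_def scheme_enc_def scheme_bits_def less;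
        intro allI impI conjI; elim conjE; simp?; argo)+
qed

lemma weights_without_msg5:
  fixes v a :: real
  assumes "0 \<le> a" "a \<le> 2 * v"
  obtains w0 w1 w2 where "0 \<le> w0" "0 \<le> w1" "0 \<le> w2" "w0 + w1 + w2 = v" "w1 + 2 * w2 = a"
    "w2 = max 0 (a - v)"
proof -
  define w2 where "w2 = max 0 (a - v)"
  show ?thesis
    by (rule that[of "v - (a - 2 * w2) - w2" "a - 2 * w2" w2]) (use assms in \<open>simp_all add: w2_def max_def\<close>)
qed

lemma weights_with_msg5:
  fixes u a b :: real
  assumes "0 \<le> a" "a \<le> u" "0 \<le> b" "b \<le> u"
  obtains w3 w4 w5 w6 where "0 \<le> w3" "0 \<le> w4" "0 \<le> w5" "0 \<le> w6" "w3 + w4 + w5 + w6 = u"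
    "w5 + w6 = a" "w4 + w6 = b"
proof -
  define w6 where "w6 = max 0 (a + b - u)"
  show ?thesis
    by (rule that[of "u - (b - w6) - (a - w6) - w6" "b - w6" "a - w6" w6])
      (use assms in \<open>simp_all add: w6_def max_def\<close>)
qed

lemma sum_lessThan_7: "(\<Sum>t<7::nat. f t) = f 0 + f 1 + f 2 + f 3 + f 4 + f 5 + f 6"
  by (simp add: eval_nat_numeral)

text \<open>Weight \<open>R 5\<close> goes to the schemes carrying message 5 and \<open>1 - R 5\<close> to the others.
  Receiver 4 gets \<open>X = max (R 4) (R 1 - R 5)\<close> bits per channel use and receiver 1 gets
  \<open>max (R 1) (R 4)\<close>; then receiver 2 gets exactly \<open>4 - R 5 - max (R 1) (R 4)\<close>, and every bit
  of \<open>X\<close> beyond \<open>1 - R 5\<close> costs receiver 3 one bit.\<close>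

lemma rate_region_dominated:
  fixes R :: "nat \<Rightarrow> real"
  assumes nonneg: "\<forall>j\<in>{1..5}. 0 \<le> R j"
    and "R 1 \<le> 2" "R 3 \<le> 2" "R 5 \<le> 1" "R 1 + R 3 \<le> 3" "R 4 + R 5 \<le> 2"
      "R 1 + R 2 + R 5 \<le> 4" "R 2 + R 4 + R 5 \<le> 4" "R 3 + R 4 + R 5 \<le> 3"
  shows "\<exists>w. (\<forall>t<7. 0 \<le> w t) \<and> (\<Sum>t<7. w t) \<le> 1 \<and>
    (\<forall>j\<in>{1..5}. R j \<le> (\<Sum>t<7. w t * real (scheme_bits t j)))"
proof -
  have R_nonneg: "0 \<le> R 1" "0 \<le> R 2" "0 \<le> R 3" "0 \<le> R 4" "0 \<le> R 5"
    using nonneg by auto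
  define u where "u = R 5"
  define X where "X = max (R 4) (R 1 - u)"
  define Y where "Y = max (R 1) (R 4) - X"
  define X0 where "X0 = min X (2 * (1 - u))"
  have X: "0 \<le> X" "X \<le> 2 - u" "R 4 \<le> X" and Y: "0 \<le> Y" "Y \<le> u"
    using assms(2-) R_nonneg unfolding X_def Y_def u_def by (simp_all add: max_def)
  have X0: "0 \<le> X0" "X0 \<le> 2 * (1 - u)" "0 \<le> X - X0" "X - X0 \<le> u"
    using X R_nonneg(5) \<open>R 5 \<le> 1\<close> unfolding X0_def u_def by (simp_all add: min_def)
  obtain w0 w1 w2 where w012: "0 \<le> w0" "0 \<le> w1" "0 \<le> w2" "w0 + w1 + w2 = 1 - u"
    "w1 + 2 * w2 = X0" "w2 = max 0 (X0 - (1 - u))"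
    using weights_without_msg5[OF X0(1,2)] by blast
  obtain w3 w4 w5 w6 where w3456: "0 \<le> w3" "0 \<le> w4" "0 \<le> w5" "0 \<le> w6"
    "w3 + w4 + w5 + w6 = u" "w5 + w6 = X - X0" "w4 + w6 = Y"
    using weights_with_msg5[OF X0(3,4) Y] by blast
  have "w2 + (X - X0) = max 0 (X - (1 - u))"
    using w012(6) X0(1) \<open>R 5 \<le> 1\<close> unfolding X0_def u_def by (simp add: max_def min_def)
  moreover have "max 0 (X - (1 - u)) \<le> 2 - R 3"
    using assms(2-) unfolding X_def u_def by (simp add: max_def)
  ultimately have R3: "R 3 \<le> 2 - w2 - (X - X0)"
    by linarith
  have R2: "R 2 \<le> 4 - u - max (R 1) (R 4)"
    using assms(2-) by (simp add: u_def max_def)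
  have XY: "X + Y = max (R 1) (R 4)" "R 1 \<le> max (R 1) (R 4)"
    by (simp_all add: Y_def)
  have rates: "R 1 \<le> w1 + 2 * w2 + w4 + w5 + 2 * w6"
    "R 2 \<le> 4 * w0 + 3 * w1 + 2 * w2 + 3 * w3 + 2 * w4 + 2 * w5 + w6"
    "R 3 \<le> 2 * w0 + 2 * w1 + w2 + 2 * w3 + 2 * w4 + w5 + w6"
    "R 4 \<le> w1 + 2 * w2 + w5 + w6"
    "R 5 \<le> w3 + w4 + w5 + w6"
    using w012 w3456 X XY R2 R3 by (simp_all add: u_def)
  define w where "w t = [w0, w1, w2, w3, w4, w5, w6] ! t" for t
  show ?thesis
  proof (intro exI[of _ w] conjI ballI allI impI)
    show "0 \<le> w t" if "t < 7" for t
      using that w012 w3456 by (auto simp: w_def less_Suc_eq numeral_eq_Suc)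
    show "(\<Sum>t<7. w t) \<le> 1"
      using w012(4) w3456(5) by (simp add: sum_lessThan_7 w_def)
    show "R j \<le> (\<Sum>t<7. w t * real (scheme_bits t j))" if "j \<in> {1..5}" for j
    proof -
      from that consider "j = 1" | "j = 2" | "j = 3" | "j = 4" | "j = 5"
        by fastforce
      then show ?thesis
        using rates by cases (simp_all add: sum_lessThan_7 w_def scheme_bits_def)
    qed
  qed
qed

definition rate_region6 :: "(nat \<Rightarrow> real) set" where
  "rate_region6 = {R. (\<forall>j. j \<notin> {1..5} \<longrightarrow> R j = 0) \<and> (\<forall>j\<in>{1..5}. 0 \<le> R j) \<and>
    R 1 \<le> 2 \<and> R 3 \<le> 2 \<and> R 5 \<le> 1 \<and> R 1 + R 3 \<le> 3 \<and> R 4 + R 5 \<le> 2 \<and>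
    R 1 + R 2 + R 5 \<le> 4 \<and> R 2 + R 4 + R 5 \<le> 4 \<and> R 3 + R 4 + R 5 \<le> 3}"

lemma achievable_in_rate_region6:
  assumes ach: "achievable 5 4 S6 (\<lambda>k. 1) A6 R"
  shows "R \<in> rate_region6"
proof -
  have cut: "(\<Sum>j\<in>T. R j) \<le> (\<Sum>k\<in>{1, 2, 3, 4}. if S6 k \<inter> T \<noteq> {} then 1 else 0)"
    if "T \<subseteq> {1..5}" "\<forall>j\<in>T. \<forall>i\<in>A6 j \<inter> T. level i < level j" for T and level :: "nat \<Rightarrow> nat"
  proof -
    have "acyclic_side_info A6 T"
      using that(2) unfolding acyclic_side_info_def by blast
    then have "(\<Sum>j\<in>T. R j) \<le> (\<Sum>k\<in>{k \<in> {1..4}. S6 k \<inter> T \<noteq> {}}. 1)"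
      using achievable_acyclic_cut_bound[OF ach that(1)] by simp
    also have "\<dots> = (\<Sum>k\<in>{1..4}. if S6 k \<inter> T \<noteq> {} then 1 else 0)"
      by (rule sum.inter_filter) simp
    also have "{1..4::nat} = {1, 2, 3, 4}"
      by auto
    finally show ?thesis .
  qed
  have "R 1 \<le> 2"
    using cut[of "{1}" id] by (simp add: S6_def A6_def)
  moreover have "R 3 \<le> 2"
    using cut[of "{3}" id] by (simp add: S6_def A6_def)
  moreover have "R 5 \<le> 1"
    using cut[of "{5}" id] by (simp add: S6_def A6_def)
  moreover have "R 1 + R 3 \<le> 3"
    using cut[of "{1, 3}" id] by (simp add: S6_def A6_def)
  moreover have "R 4 + R 5 \<le> 2"
    using cut[of "{4, 5}" "\<lambda>j. if j = 5 then 0 else 1"] by (simp add: S6_def A6_def)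
  moreover have "R 1 + R 2 + R 5 \<le> 4"
    using cut[of "{1, 2, 5}" "\<lambda>j. if j = 5 then 0 else if j = 1 then 1 else 2"]
    by (simp add: S6_def A6_def)
  moreover have "R 2 + R 4 + R 5 \<le> 4"
    using cut[of "{2, 4, 5}" "\<lambda>j. if j = 5 then 0 else if j = 2 then 1 else 2"]
    by (simp add: S6_def A6_def)
  moreover have "R 3 + R 4 + R 5 \<le> 3"
    using cut[of "{3, 4, 5}" "\<lambda>j. if j = 3 then 0 else if j = 5 then 1 else 2"]
    by (simp add: S6_def A6_def)
  moreover have "\<forall>j. 0 \<le> R j" "\<forall>j. j \<notin> {1..5} \<longrightarrow> R j = 0"
    using ach by (simp_all add: achievable_def)
  ultimately show ?thesis
    by (simp add: rate_region6_def)
qed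

lemma closed_rate_region6: "closed rate_region6"
  unfolding rate_region6_def Ball_def
  by (intro closed_Collect_conj closed_Collect_all closed_Collect_imp open_Collect_const
      closed_Collect_eq closed_Collect_le continuous_intros continuous_on_product_coordinates)

lemma achievable_scaled_rate_region6:
  assumes R: "R \<in> rate_region6" and s: "0 < s" "s < 1"
  shows "achievable 5 4 S6 (\<lambda>k. 1) A6 (\<lambda>j. s * R j)"
proof -
  obtain w where w_nonneg: "\<forall>t<7. 0 \<le> w t" and w_sum: "(\<Sum>t<7. w t) \<le> 1"
    and w_rates: "\<forall>j\<in>{1..5}. R j \<le> (\<Sum>t<7. w t * real (scheme_bits t j))"
    using R rate_region_dominated[of R] by (auto simp: rate_region6_def)
  have R_nonneg: "0 \<le> R j" for j
    using R by (cases "j \<in> {1..5}") (auto simp: rate_region6_def)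
  show ?thesis
  proof (rule achievable_by_time_sharing[where w = "\<lambda>t. s * w t"])
    show "\<forall>k\<in>{1..4}. (\<Sum>t<7. s * w t) < 1"
      using w_sum s by (simp add: sum_distrib_left[symmetric]) (smt (verit) mult_left_le)
    show "\<forall>j\<in>{1..5}. s * R j \<le> (\<Sum>t<7. s * w t * real (scheme_bits t j))"
      using w_rates s by (simp add: sum_distrib_left[symmetric] mult.assoc)
  qed (use one_bit_scheme_instance w_nonneg R R_nonneg s in \<open>auto simp: rate_region6_def\<close>)
qed

theorem mainTheorem6:
  shows "capacity_region 5 4 S6 (\<lambda>k. 1) A6 =
    {R. (\<forall>j. j \<notin> {1..5} \<longrightarrow> R j = 0) \<and> (\<forall>j\<in>{1..5}. 0 \<le> R j) \<and>
        R 1 \<le> 2 \<and> R 3 \<le> 2 \<and> R 5 \<le> 1 \<and> R 1 + R 3 \<le> 3 \<and> R 4 + R 5 \<le> 2 \<and>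
        R 1 + R 2 + R 5 \<le> 4 \<and> R 2 + R 4 + R 5 \<le> 4 \<and> R 3 + R 4 + R 5 \<le> 3}"
proof -
  have "capacity_region 5 4 S6 (\<lambda>k. 1) A6 \<subseteq> rate_region6"
    unfolding capacity_region_def
    by (intro closure_minimal closed_rate_region6) (auto intro: achievable_in_rate_region6)
  moreover have "rate_region6 \<subseteq> capacity_region 5 4 S6 (\<lambda>k. 1) A6"
    unfolding capacity_region_def
    by (auto intro!: mem_closure_if_scaled_mem achievable_scaled_rate_region6)
  ultimately show ?thesis
    unfolding rate_region6_def by blast
qed

end
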